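(* Let $D=\{(s,q)\in\mathbb{H}\times\mathbb{H}: q^2-2q\,\mathrm{Re}[s]+|s|^2\neq0\}$ and define $F:D\to\mathbb{H}$ by $$F(s,q)=-\big(q^2-2q\,\mathrm{Re}[s]+|s|^2\big)^{-1}(q-\bar s).$$ Then for every point $(s_*,q_* )\in(\mathbb{H}\times\mathbb{H})\setminus D$, $F$ admits no continuous extension to $D\cup\{(s_*,q_* )\}$. In particular, for every $s\in\mathbb{H}\setminus\mathbb{R}$ the limit $\lim_{q\to\bar s}F(s,q)$ (over $q$ with $(s,q)\in D$) does not exist.
   Context: $\mathbb{H}$ denotes the algebra of quaternions; $\bar s$, $|s|$, $\mathrm{Re}[s]$ are conjugate, norm and real part. *)

theory Defs
  imports "HOL-Analysis.Analysis"
begin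

text \<open>The library has no quaternions; we model \<open>\<bbbH>\<close> as \<open>real^4\<close>
  (coordinates 0,1,2,3 = real, i, j, k parts), which carries the Euclidean
  norm (= quaternion norm) and topology, and define the Hamilton product,
  conjugate, real part and inverse explicitly.\<close>

type_synonym quat = "real^4"

definition quat :: "real \<Rightarrow> real \<Rightarrow> real \<Rightarrow> real \<Rightarrow> quat" where
  "quat a b c d = (\<chi> i. if i = 0 then a else if i = 1 then b else if i = 2 then c else d)"

definition qre :: "quat \<Rightarrow> real" where "qre q = q $ 0"
definition qi :: "quat \<Rightarrow> real" where "qi q = q $ 1"
definition qj :: "quat \<Rightarrow> real" where "qj q = q $ 2"
definition qk :: "quat \<Rightarrow> real" where "qk q = q $ 3"

definition qmult :: "quat \<Rightarrow> quat \<Rightarrow> quat" where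
  "qmult p q = quat
     (qre p * qre q - qi p * qi q - qj p * qj q - qk p * qk q)
     (qre p * qi q + qi p * qre q + qj p * qk q - qk p * qj q)
     (qre p * qj q - qi p * qk q + qj p * qre q + qk p * qi q)
     (qre p * qk q + qi p * qj q - qj p * qi q + qk p * qre q)"

definition qcnj :: "quat \<Rightarrow> quat" where
  "qcnj q = quat (qre q) (- qi q) (- qj q) (- qk q)"

definition qofreal :: "real \<Rightarrow> quat" where
  "qofreal r = quat r 0 0 0"

definition qinverse :: "quat \<Rightarrow> quat" where
  "qinverse q = (1 / (norm q)\<^sup>2) *\<^sub>R qcnj q"

definition charpoly :: "quat \<Rightarrow> quat \<Rightarrow> quat" where
  "charpoly s q = qmult q q - (2 * qre s) *\<^sub>R q + qofreal ((norm s)\<^sup>2)"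

definition dom_D :: "(quat \<times> quat) set" where
  "dom_D = {(s, q). charpoly s q \<noteq> 0}"

definition F :: "quat \<times> quat \<Rightarrow> quat" where
  "F sq = (case sq of (s, q) \<Rightarrow> - qmult (qinverse (charpoly s q)) (q - qcnj s))"

end

theory Submission
  imports Defs "HOL-Real_Asymp.Real_Asymp"
begin

(* The Cauchy-type kernel F(s,q) = -(q^2 - 2 q Re s + |s|^2)^(-1) (q - conj s) is unbounded
   near every point of the complement of its domain D; this rules out both a continuous
   extension to such a point and a limit at q = conj s.

   Two estimates follow: approaching conj s in a pure imaginary direction J
   orthogonal to Im s gives t * |F| = 1/|J| exactly; approaching any other zero of the
   characteristic polynomial (a point of the 2-sphere Re q = Re s, |Im q| = |Im s|) along
   the real axis gives t * |F| bounded below.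
   Both statements hold for every s. *)

section \<open>Blow-up excludes limits and continuous extensions\<close>

definition blows_up_along ::
    "('a::topological_space \<Rightarrow> 'b::real_normed_vector) \<Rightarrow> 'a set \<Rightarrow> 'a \<Rightarrow> bool" where
  "blows_up_along f S a \<longleftrightarrow>
     (\<exists>X. (\<forall>n. X n \<in> S - {a}) \<and> X \<longlonglongrightarrow> a \<and> filterlim (\<lambda>n. f (X n)) at_infinity sequentially)"

lemma blows_up_along_no_limit:
  fixes f :: "'a::first_countable_topology \<Rightarrow> 'b::real_normed_vector"
  assumes "blows_up_along f S a"
  shows "\<not> (f \<longlongrightarrow> L) (at a within S)"
proof
  assume lim: "(f \<longlongrightarrow> L) (at a within S)"
  obtain X where X: "\<And>n. X n \<in> S - {a}" "X \<longlonglongrightarrow> a"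
    and inf: "filterlim (\<lambda>n. f (X n)) at_infinity sequentially"
    using assms unfolding blows_up_along_def by blast
  have "(\<lambda>n. f (X n)) \<longlonglongrightarrow> L"
    using lim X unfolding tendsto_at_iff_sequentially comp_def by blast
  with inf show False
    using not_tendsto_and_filterlim_at_infinity trivial_limit_sequentially by blast
qed

lemma continuous_extension_limit:
  assumes "continuous_on (insert a S) G" and "\<And>x. x \<in> S \<Longrightarrow> G x = f x"
  shows "(f \<longlongrightarrow> G a) (at a within S)"
proof -
  have "(G \<longlongrightarrow> G a) (at a within insert a S)"
    using assms(1) by (simp add: continuous_on_def)
  then have "(G \<longlongrightarrow> G a) (at a within S)"
    by (rule tendsto_within_subset) auto
  then show ?thesis
    by (rule Lim_transform_eventually) (use assms(2) in \<open>auto simp: eventually_at_filter\<close>)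
qed

lemma blows_up_along_segment:
  fixes f :: "'a::real_normed_vector \<Rightarrow> 'b::real_normed_vector"
  assumes "v \<noteq> 0" and "c > 0"
    and bound: "\<And>t. 0 < t \<Longrightarrow> t \<le> 1 \<Longrightarrow> a + t *\<^sub>R v \<in> S \<and> c \<le> t * norm (f (a + t *\<^sub>R v))"
  shows "blows_up_along f S a"
  unfolding blows_up_along_def
proof (intro exI conjI allI)
  define t where "t n = 1 / (real n + 1)" for n
  have t: "0 < t n" "t n \<le> 1" for n by (simp_all add: t_def field_simps)
  show "a + t n *\<^sub>R v \<in> S - {a}" for n
    using bound[OF t] t(1)[of n] assms(1) by simp
  have "t \<longlonglongrightarrow> 0"
    unfolding t_def using LIMSEQ_Suc[OF lim_inverse_n'] by (simp add: add.commute)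
  then show "(\<lambda>n. a + t n *\<^sub>R v) \<longlonglongrightarrow> a"
    by (auto intro!: tendsto_eq_intros)
  have lower: "c * (real n + 1) \<le> norm (f (a + t n *\<^sub>R v))" for n
    using bound[OF t, of n] by (simp add: t_def field_simps)
  have "filterlim (\<lambda>n. c * (real n + 1)) at_top sequentially"
    using \<open>c > 0\<close> by real_asymp
  then show "filterlim (\<lambda>n. f (a + t n *\<^sub>R v)) at_infinity sequentially"
    unfolding filterlim_at_infinity_conv_norm_at_top
    by (rule filterlim_at_top_mono) (simp add: lower)
qed

section \<open>Quaternion arithmetic in coordinates\<close>

lemma quat_coords [simp]:
  "qre (quat a b c d) = a" "qi (quat a b c d) = b" "qj (quat a b c d) = c" "qk (quat a b c d) = d"
  by (simp_all add: quat_def qre_def qi_def qj_def qk_def)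

lemma quat_coords_linear [simp]:
  "qre (x + y) = qre x + qre y" "qi (x + y) = qi x + qi y"
  "qj (x + y) = qj x + qj y" "qk (x + y) = qk x + qk y"
  "qre (x - y) = qre x - qre y" "qi (x - y) = qi x - qi y"
  "qj (x - y) = qj x - qj y" "qk (x - y) = qk x - qk y"
  "qre (r *\<^sub>R x) = r * qre x" "qi (r *\<^sub>R x) = r * qi x"
  "qj (r *\<^sub>R x) = r * qj x" "qk (r *\<^sub>R x) = r * qk x"
  "qre 0 = 0" "qi 0 = 0" "qj 0 = 0" "qk 0 = 0"
  by (simp_all add: qre_def qi_def qj_def qk_def)

lemma quat_eq_iff: "x = y \<longleftrightarrow> qre x = qre y \<and> qi x = qi y \<and> qj x = qj y \<and> qk x = qk y"
proof -
  have four: "(4::4) = 0" by simp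
  show ?thesis
    unfolding vec_eq_iff forall_4 qre_def qi_def qj_def qk_def by (auto simp: four)
qed

lemma norm_quat_sq: "(norm x)\<^sup>2 = (qre x)\<^sup>2 + (qi x)\<^sup>2 + (qj x)\<^sup>2 + (qk x)\<^sup>2"
proof -
  have four: "(4::4) = 0" by simp
  show ?thesis
    unfolding norm_vec_def L2_set_def sum_4 qre_def qi_def qj_def qk_def
    by (simp add: four sum_nonneg algebra_simps)
qed

text \<open>The norm is multiplicative (Euler's four-square identity) and conjugation-invariant.\<close>
lemma norm_qmult: "norm (qmult p q) = norm p * norm q"
proof -
  have "(norm (qmult p q))\<^sup>2 = (norm p * norm q)\<^sup>2"
    unfolding power_mult_distrib norm_quat_sq by (simp add: qmult_def) algebra
  then show ?thesis by (simp add: power2_eq_imp_eq)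
qed

lemma norm_qcnj: "norm (qcnj q) = norm q"
proof -
  have "(norm (qcnj q))\<^sup>2 = (norm q)\<^sup>2" unfolding norm_quat_sq by (simp add: qcnj_def)
  then show ?thesis by (simp add: power2_eq_imp_eq)
qed

lemma norm_F: "norm (F (s, q)) = norm (q - qcnj s) / norm (charpoly s q)"
  by (simp add: F_def norm_qmult qinverse_def norm_qcnj power2_eq_square)

lemma charpoly_coords:
  "qre (charpoly s q) = (qre q)\<^sup>2 - (qi q)\<^sup>2 - (qj q)\<^sup>2 - (qk q)\<^sup>2 - 2 * qre s * qre q
      + ((qre s)\<^sup>2 + (qi s)\<^sup>2 + (qj s)\<^sup>2 + (qk s)\<^sup>2)"
  "qi (charpoly s q) = 2 * (qre q - qre s) * qi q"
  "qj (charpoly s q) = 2 * (qre q - qre s) * qj q"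
  "qk (charpoly s q) = 2 * (qre q - qre s) * qk q"
  using norm_quat_sq[of s]
  by (simp_all add: charpoly_def qmult_def qofreal_def power2_eq_square algebra_simps)

lemma charpoly_zero_sphere:
  assumes "charpoly s q = 0"
  shows "qre q = qre s" and "(qi q)\<^sup>2 + (qj q)\<^sup>2 + (qk q)\<^sup>2 = (qi s)\<^sup>2 + (qj s)\<^sup>2 + (qk s)\<^sup>2"
proof -
  have zero: "qre (charpoly s q) = 0" "qi (charpoly s q) = 0"
      "qj (charpoly s q) = 0" "qk (charpoly s q) = 0"
    using assms by simp_all
  show re: "qre q = qre s"
  proof (rule ccontr)
    assume ne: "qre q \<noteq> qre s"
    then have "qi q = 0" "qj q = 0" "qk q = 0"
      using zero unfolding charpoly_coords by auto
    then have "(qre q - qre s)\<^sup>2 + ((qi s)\<^sup>2 + (qj s)\<^sup>2 + (qk s)\<^sup>2) = 0"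
      using zero(1) unfolding charpoly_coords by (simp add: power2_eq_square algebra_simps)
    moreover have "(qre q - qre s)\<^sup>2 > 0" using ne by simp
    ultimately show False
      by (metis add_pos_nonneg less_irrefl sum_squares_ge_zero zero_le_power2 add_nonneg_nonneg)
  qed
  show "(qi q)\<^sup>2 + (qj q)\<^sup>2 + (qk q)\<^sup>2 = (qi s)\<^sup>2 + (qj s)\<^sup>2 + (qk s)\<^sup>2"
    using zero(1) re unfolding charpoly_coords by (simp add: power2_eq_square algebra_simps)
qed

section \<open>Growth of the kernel near the zero sphere\<close>

text \<open>Near \<open>conj s\<close>: for a nonzero pure imaginary \<open>J\<close> orthogonal to \<open>Im s\<close> the characteristic
  polynomial at \<open>conj s + t J\<close> equals \<open>-t\<^sup>2 |J|\<^sup>2\<close>, so \<open>t |F| = 1/|J|\<close> exactly.\<close>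
lemma F_growth_at_conjugate:
  obtains J where "J \<noteq> 0"
    and "\<And>t. t > 0 \<Longrightarrow> (s, qcnj s + t *\<^sub>R J) \<in> dom_D \<and>
                         t * norm (F (s, qcnj s + t *\<^sub>R J)) = 1 / norm J"
proof -
  define J where "J = (if qi s = 0 \<and> qj s = 0 then quat 0 1 0 0 else quat 0 (- qj s) (qi s) 0)"
  have J_pure: "qre J = 0" "qk J = 0" and J_orth: "qi J * qi s + qj J * qj s = 0"
    unfolding J_def by auto
  have "(qi J)\<^sup>2 + (qj J)\<^sup>2 > 0"
    unfolding J_def by (auto simp: sum_power2_gt_zero_iff)
  then have normJ_sq: "(norm J)\<^sup>2 = (qi J)\<^sup>2 + (qj J)\<^sup>2" and normJ: "norm J > 0"
    using J_pure unfolding norm_quat_sq by (auto simp: sum_power2_gt_zero_iff)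
  show ?thesis
  proof (rule that)
    show "J \<noteq> 0" using normJ by auto
    fix t :: real assume t: "t > 0"
    have "2 * t * (qi J * qi s + qj J * qj s) = 0" using J_orth by simp
    have "charpoly s (qcnj s + t *\<^sub>R J) = quat (- (t\<^sup>2 * (norm J)\<^sup>2)) 0 0 0"
      unfolding quat_eq_iff charpoly_coords normJ_sq
      using J_pure \<open>2 * t * (qi J * qi s + qj J * qj s) = 0\<close>
      by (simp add: qcnj_def power2_eq_square algebra_simps)
    then have "(norm (charpoly s (qcnj s + t *\<^sub>R J)))\<^sup>2 = (t\<^sup>2 * (norm J)\<^sup>2)\<^sup>2"
      unfolding norm_quat_sq by simp
    then have cp: "norm (charpoly s (qcnj s + t *\<^sub>R J)) = t\<^sup>2 * (norm J)\<^sup>2"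
      by (simp add: power2_eq_imp_eq)
    have "charpoly s (qcnj s + t *\<^sub>R J) \<noteq> 0"
      using cp t normJ by (metis norm_zero mult_pos_pos zero_less_power less_irrefl)
    then show "(s, qcnj s + t *\<^sub>R J) \<in> dom_D \<and> t * norm (F (s, qcnj s + t *\<^sub>R J)) = 1 / norm J"
      using t normJ unfolding dom_D_def by (auto simp: norm_F cp power2_eq_square)
  qed
qed

text \<open>Near a zero \<open>q \<noteq> conj s\<close>: along \<open>q + t\<close> one has
  \<open>(t |F|)\<^sup>2 = (t\<^sup>2 + K) / (t\<^sup>2 + 4 V)\<close> with \<open>K = |Im q + Im s|\<^sup>2 > 0\<close> and \<open>V = |Im q|\<^sup>2\<close>,
  which stays above \<open>K / (1 + 4 V)\<close> for \<open>0 < t \<le> 1\<close>.\<close>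
lemma F_growth_at_sphere_point:
  assumes zero: "charpoly s q = 0" and ne: "q \<noteq> qcnj s"
  obtains c where "c > 0"
    and "\<And>t. 0 < t \<Longrightarrow> t \<le> 1 \<Longrightarrow> (s, q + t *\<^sub>R quat 1 0 0 0) \<in> dom_D \<and>
                                 c \<le> t * norm (F (s, q + t *\<^sub>R quat 1 0 0 0))"
proof -
  define V where "V = (qi q)\<^sup>2 + (qj q)\<^sup>2 + (qk q)\<^sup>2"
  define K where "K = (qi q + qi s)\<^sup>2 + (qj q + qj s)\<^sup>2 + (qk q + qk s)\<^sup>2"
  note re = charpoly_zero_sphere(1)[OF zero] and im = charpoly_zero_sphere(2)[OF zero]
  have V: "V \<ge> 0" unfolding V_def by simp
  have "K \<noteq> 0"
  proof
    assume "K = 0"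
    then have "qi q + qi s = 0" "qj q + qj s = 0" "qk q + qk s = 0"
      unfolding K_def by (simp_all add: sum_power2_eq_zero_iff add_nonneg_eq_0_iff)
    then show False using ne re unfolding quat_eq_iff qcnj_def by simp
  qed
  then have K: "K > 0" unfolding K_def by (simp add: order_less_le)
  show ?thesis
  proof (rule that)
    show "sqrt (K / (1 + 4 * V)) > 0" using K V by simp
    fix t :: real assume t: "0 < t" "t \<le> 1"
    define x where "x = q + t *\<^sub>R quat 1 0 0 0"
    have cp_re: "qre (charpoly s x) = t\<^sup>2"
      unfolding x_def charpoly_coords using re im
      by (simp add: power2_eq_square algebra_simps)
    have den: "(norm (charpoly s x))\<^sup>2 = t\<^sup>2 * (t\<^sup>2 + 4 * V)"
      unfolding norm_quat_sq cp_re unfolding x_def charpoly_coords V_def using re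
      by (simp add: power2_eq_square algebra_simps)
    have cp_pos: "(norm (charpoly s x))\<^sup>2 > 0" using den t V by (simp add: add_pos_nonneg)
    have num: "(norm (x - qcnj s))\<^sup>2 = t\<^sup>2 + K"
      unfolding x_def norm_quat_sq K_def using re by (simp add: qcnj_def)
    have "(t * norm (F (s, x)))\<^sup>2 = t\<^sup>2 * (norm (x - qcnj s))\<^sup>2 / (norm (charpoly s x))\<^sup>2"
      by (simp add: norm_F power_mult_distrib power_divide)
    also have "\<dots> = (t\<^sup>2 + K) / (t\<^sup>2 + 4 * V)"
      using num den t by (simp add: power2_eq_square)
    also have "\<dots> \<ge> K / (1 + 4 * V)"
    proof -
      have "t\<^sup>2 \<le> 1" using t by (simp add: power_le_one)
      then have "K * (t\<^sup>2 + 4 * V) \<le> (t\<^sup>2 + K) * (1 + 4 * V)"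
        using K V t by (simp add: algebra_simps add_nonneg_nonneg mult_left_mono
            add_increasing2 mult_nonneg_nonneg)
      moreover have "1 + 4 * V > 0" "t\<^sup>2 + 4 * V > 0" using V t by (auto simp: add_pos_nonneg)
      ultimately show ?thesis by (simp add: divide_simps)
    qed
    finally have "sqrt (K / (1 + 4 * V)) \<le> sqrt ((t * norm (F (s, x)))\<^sup>2)"
      by (rule real_sqrt_le_mono)
    then show "(s, x) \<in> dom_D \<and> sqrt (K / (1 + 4 * V)) \<le> t * norm (F (s, x))"
      using cp_pos t unfolding dom_D_def by auto
  qed
qed

lemma F_blows_up_off_domain:
  assumes "p \<notin> dom_D"
  shows "blows_up_along F dom_D p"
proof -
  obtain s q where p: "p = (s, q)" by fastforce
  have zero: "charpoly s q = 0" using assms p unfolding dom_D_def by auto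
  show ?thesis
  proof (cases "q = qcnj s")
    case True
    obtain J where "J \<noteq> 0" and growth: "\<And>t. t > 0 \<Longrightarrow> (s, qcnj s + t *\<^sub>R J) \<in> dom_D \<and>
        t * norm (F (s, qcnj s + t *\<^sub>R J)) = 1 / norm J"
      using F_growth_at_conjugate[of s] by blast
    show ?thesis
      by (rule blows_up_along_segment[where v = "(0, J)" and c = "1 / norm J"])
        (use \<open>J \<noteq> 0\<close> growth in \<open>auto simp: p True zero_prod_def\<close>)
  next
    case False
    obtain c where "c > 0" and growth: "\<And>t. 0 < t \<Longrightarrow> t \<le> 1 \<Longrightarrow>
        (s, q + t *\<^sub>R quat 1 0 0 0) \<in> dom_D \<and> c \<le> t * norm (F (s, q + t *\<^sub>R quat 1 0 0 0))"
      using F_growth_at_sphere_point[OF zero False] by blast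
    have "quat 1 0 0 0 \<noteq> 0" by (simp add: quat_eq_iff)
    show ?thesis
      by (rule blows_up_along_segment[where v = "(0, quat 1 0 0 0)" and c = c])
        (use \<open>quat 1 0 0 0 \<noteq> 0\<close> \<open>c > 0\<close> growth in \<open>auto simp: p zero_prod_def\<close>)
  qed
qed

lemma F_blows_up_at_conjugate:
  "blows_up_along (\<lambda>q. F (s, q)) {q. (s, q) \<in> dom_D} (qcnj s)"
proof -
  obtain J where "J \<noteq> 0" and growth: "\<And>t. t > 0 \<Longrightarrow> (s, qcnj s + t *\<^sub>R J) \<in> dom_D \<and>
      t * norm (F (s, qcnj s + t *\<^sub>R J)) = 1 / norm J"
    using F_growth_at_conjugate[of s] by blast
  show ?thesis
    by (rule blows_up_along_segment[where v = J and c = "1 / norm J"])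
      (use \<open>J \<noteq> 0\<close> growth in auto)
qed

theorem theorem3p9:
  shows "(\<forall>p. p \<notin> dom_D \<longrightarrow>
            \<not> (\<exists>G :: quat \<times> quat \<Rightarrow> quat.
                  continuous_on (insert p dom_D) G \<and> (\<forall>x\<in>dom_D. G x = F x)))
       \<and> (\<forall>s :: quat. s \<notin> range qofreal \<longrightarrow>
            \<not> (\<exists>L. ((\<lambda>q. F (s, q)) \<longlongrightarrow> L) (at (qcnj s) within {q. (s, q) \<in> dom_D})))"
proof (intro conjI allI impI notI)
  fix p :: "quat \<times> quat"
  assume "p \<notin> dom_D"
    and "\<exists>G :: quat \<times> quat \<Rightarrow> quat. continuous_on (insert p dom_D) G \<and> (\<forall>x\<in>dom_D. G x = F x)"
  then obtain G :: "quat \<times> quat \<Rightarrow> quat"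
    where "continuous_on (insert p dom_D) G" and "\<forall>x\<in>dom_D. G x = F x" by blast
  then have "(F \<longlongrightarrow> G p) (at p within dom_D)"
    by (intro continuous_extension_limit) auto
  with blows_up_along_no_limit[OF F_blows_up_off_domain[OF \<open>p \<notin> dom_D\<close>]] show False
    by blast
next
  fix s :: quat
  assume "\<exists>L. ((\<lambda>q. F (s, q)) \<longlongrightarrow> L) (at (qcnj s) within {q. (s, q) \<in> dom_D})"
  with blows_up_along_no_limit[OF F_blows_up_at_conjugate] show False
    by blast
qed

end
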